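(* Let $\mu^\ast$ be an upper quasi-density on $\mathbb{H}$, let $X\subseteq Y\subseteq\mathbb{H}$ with $\mu^\ast(X)<\mu^\ast(Y)$, and let $\xi$ be a real number with $\mu^\ast(X)<\xi<\mu^\ast(Y)$. Then there exist sequences $(A_n)_{n\ge1}$, $(B_n)_{n\ge1}$ of subsets of $\mathbb{H}$ such that: (i) $X\subseteq A_1\subseteq A_2\subseteq\cdots\subseteq A_n\subseteq\cdots\subseteq B_n\subseteq\cdots\subseteq B_2\subseteq B_1\subseteq Y$; (ii) $\mu^\ast(A_n)<\xi\le\mu^\ast(B_n)$ for all $n\in\mathbb{N}^+$; (iii) for each $n\in\mathbb{N}^+$ there exist $h,k\in\mathbb{N}$ with $k\ge n$ and $B_n\setminus A_n\subseteq k\cdot\mathbb{H}+h$.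
   Context: $\mathbb{N}=\{0,1,2,\dots\}$, $\mathbb{N}^+=\{1,2,\dots\}$; $\mathbb{H}$ is one of $\mathbb{Z},\mathbb{N},\mathbb{N}^+$. For $X\subseteq\mathbb{H}$, $k\in\mathbb{N}^+$, $h\in\mathbb{N}$, $k\cdot X+h:=\{kx+h:x\in X\}$. An upper quasi-density on $\mathbb{H}$ is a function $\mu^\ast:\mathcal{P}(\mathbb{H})\to\mathbb{R}$ with $\mu^\ast(\mathbb{H})=1$, $\mu^\ast(X)\le1$ for all $X$, $\mu^\ast(X\cup Y)\le\mu^\ast(X)+\mu^\ast(Y)$ for all $X,Y$, and $\mu^\ast(k\cdot X+h)=\frac1k\mu^\ast(X)$ for all $X\subseteq\mathbb{H}$, $h,k\in\mathbb{N}^+$. *)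

theory Defs
  imports Main "HOL.Real"
begin

text \<open>The ambient set H is modelled as a subset of the integers: Z, N or N+.\<close>
definition ambient :: "int set \<Rightarrow> bool" where
  "ambient H \<longleftrightarrow> H = UNIV \<or> H = {0..} \<or> H = {1..}"

definition dilate_shift :: "int \<Rightarrow> int set \<Rightarrow> int \<Rightarrow> int set" where
  "dilate_shift k X h = (\<lambda>x. k * x + h) ` X"

definition upper_quasi_density :: "int set \<Rightarrow> (int set \<Rightarrow> real) \<Rightarrow> bool" where
  "upper_quasi_density H \<mu> \<longleftrightarrow>
     \<mu> H = 1 \<and>
     (\<forall>X. X \<subseteq> H \<longrightarrow> \<mu> X \<le> 1) \<and>
     (\<forall>X Y. X \<subseteq> H \<longrightarrow> Y \<subseteq> H \<longrightarrow> \<mu> (X \<union> Y) \<le> \<mu> X + \<mu> Y) \<and>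
     (\<forall>X h k. X \<subseteq> H \<longrightarrow> h \<ge> 1 \<longrightarrow> k \<ge> 1 \<longrightarrow>
        \<mu> (dilate_shift k X h) = \<mu> X / real_of_int k)"

end

theory Submission
  imports Defs
begin

text \<open>Call a pair \<open>A \<subseteq> B\<close> straddling \<open>\<xi>\<close> if \<open>\<mu> A < \<xi> \<le> \<mu> B\<close>. Starting from
  \<open>(X, Y)\<close>, the \<open>n\<close>-th pair is shrunk to a straddling pair whose difference lies in a single
  residue class modulo \<open>n\<close>: the difference is covered by the \<open>n\<close> classes \<open>n \<cdot> \<bbbH> + r\<close> together
  with the finitely many integers in \<open>[0, n)\<close>, and adding the pieces of this cover to \<open>A\<close> one at a
  time, \<open>\<mu>\<close> must cross \<open>\<xi>\<close> when some piece is added. The crossing piece cannot be a singleton,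
  because points are null for an upper quasi-density: \<open>{2a + h}\<close> is both a translate of \<open>{a}\<close>
  and the dilate \<open>2 \<cdot> {a} + h\<close>, so its density is both that of \<open>{a}\<close> and half of it.\<close>

definition straddles :: "('a set \<Rightarrow> real) \<Rightarrow> real \<Rightarrow> 'a set \<Rightarrow> 'a set \<Rightarrow> bool" where
  "straddles \<mu> \<xi> A B \<longleftrightarrow> A \<subseteq> B \<and> \<mu> A < \<xi> \<and> \<xi> \<le> \<mu> B"

lemma straddles_neq: "straddles \<mu> \<xi> A B \<Longrightarrow> A \<noteq> B"
  unfolding straddles_def using order.strict_trans2 by blast

lemma straddles_refine_to_cover_piece:
  assumes "finite \<D>" and "B - A \<subseteq> \<Union>\<D>" and "straddles \<mu> \<xi> A B"
  shows "\<exists>A' B' D. D \<in> \<D> \<and> A \<subseteq> A' \<and> B' \<subseteq> B \<and> straddles \<mu> \<xi> A' B' \<and> B' - A' \<subseteq> D"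
  using assms
proof (induction \<D> arbitrary: A rule: finite_induct)
  case empty
  then have "B = A" by (auto simp: straddles_def)
  with empty.prems show ?case by (auto dest: straddles_neq)
next
  case (insert D \<D>)
  define C where "C = A \<union> (B \<inter> D)"
  show ?case
  proof (cases "\<xi> \<le> \<mu> C")
    case True
    with insert.prems have "straddles \<mu> \<xi> A C" "C - A \<subseteq> D" "C \<subseteq> B"
      by (auto simp: straddles_def C_def)
    then show ?thesis by blast
  next
    case False
    with insert.prems have "straddles \<mu> \<xi> C B" "B - C \<subseteq> \<Union>\<D>"
      by (auto simp: straddles_def C_def)
    from insert.IH[OF this(2,1)] obtain A' B' D' where
      "D' \<in> \<D>" "C \<subseteq> A'" "B' \<subseteq> B" "straddles \<mu> \<xi> A' B'" "B' - A' \<subseteq> D'"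
      by blast
    moreover have "A \<subseteq> C" by (simp add: C_def)
    ultimately show ?thesis by (meson insertCI order_trans)
  qed
qed

lemma upper_quasi_density_dilate_shift:
  "upper_quasi_density H \<mu> \<Longrightarrow> X \<subseteq> H \<Longrightarrow> h \<ge> 1 \<Longrightarrow> k \<ge> 1 \<Longrightarrow>
    \<mu> (dilate_shift k X h) = \<mu> X / real_of_int k"
  unfolding upper_quasi_density_def by blast

lemma upper_quasi_density_subadditive:
  "upper_quasi_density H \<mu> \<Longrightarrow> X \<subseteq> H \<Longrightarrow> Y \<subseteq> H \<Longrightarrow> \<mu> (X \<union> Y) \<le> \<mu> X + \<mu> Y"
  unfolding upper_quasi_density_def by blast

lemma upper_quasi_density_singleton:
  assumes "upper_quasi_density H \<mu>" and "a \<in> H"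
  shows "\<mu> {a} = 0"
proof -
  define h where "h = \<bar>a\<bar> + 1"
  have "h \<ge> 1" "a + h \<ge> 1" "{a} \<subseteq> H" unfolding h_def using assms(2) by auto
  note dilate = upper_quasi_density_dilate_shift[OF assms(1) \<open>{a} \<subseteq> H\<close>]
  have "\<mu> {2 * a + h} = \<mu> {a} / 2"
    using dilate[of h 2] \<open>h \<ge> 1\<close> by (simp add: dilate_shift_def)
  moreover have "\<mu> {2 * a + h} = \<mu> {a}"
    using dilate[of "a + h" 1] \<open>a + h \<ge> 1\<close> by (simp add: dilate_shift_def algebra_simps)
  ultimately have "\<mu> {a} = \<mu> {a} / 2" by simp
  then show ?thesis by simp
qed

lemma straddles_gap_not_singleton:
  assumes "upper_quasi_density H \<mu>" and "B \<subseteq> H" and "straddles \<mu> \<xi> A B"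
  shows "\<not> B - A \<subseteq> {a}"
proof
  assume gap: "B - A \<subseteq> {a}"
  have "A \<subseteq> H" "A \<subseteq> B" using assms unfolding straddles_def by auto
  show False
  proof (cases "a \<in> B - A")
    case True
    with gap \<open>A \<subseteq> B\<close> have "B = A \<union> {a}" by auto
    have "a \<in> H" using True assms(2) by auto
    have "\<mu> (A \<union> {a}) \<le> \<mu> A + \<mu> {a}"
      using upper_quasi_density_subadditive[OF assms(1) \<open>A \<subseteq> H\<close>, of "{a}"] \<open>a \<in> H\<close> by blast
    moreover have "\<mu> {a} = 0" using upper_quasi_density_singleton[OF assms(1) \<open>a \<in> H\<close>] .
    ultimately have "\<mu> B \<le> \<mu> A" using \<open>B = A \<union> {a}\<close> by simp
    with assms(3) show False unfolding straddles_def by linarith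
  next
    case False
    with gap \<open>A \<subseteq> B\<close> have "B = A" by auto
    with assms(3) show False by (auto dest: straddles_neq)
  qed
qed

lemma ambient_div_mem:
  assumes "ambient H" and "K > 0" and "x \<in> H" and "x < 0 \<or> K \<le> x"
  shows "x div K \<in> H"
proof -
  have "x < 0 \<Longrightarrow> H = UNIV" using assms(1,3) unfolding ambient_def by auto
  moreover have "K \<le> x \<Longrightarrow> 1 \<le> x div K"
    using assms(2) by (metis div_self zdiv_mono1 order.strict_iff_not)
  ultimately show ?thesis using assms unfolding ambient_def by auto
qed

lemma ambient_subset_residue_cover:
  assumes "ambient H" and "K \<ge> 1"
  shows "H \<subseteq> \<Union>((\<lambda>r. dilate_shift (int K) H (int r)) ` {..<K} \<union> (\<lambda>i. {int i}) ` {..<K})"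
proof
  fix x assume "x \<in> H"
  show "x \<in> \<Union>((\<lambda>r. dilate_shift (int K) H (int r)) ` {..<K} \<union> (\<lambda>i. {int i}) ` {..<K})"
  proof (cases "0 \<le> x \<and> x < int K")
    case True
    then show ?thesis by (auto intro!: bexI[of _ "nat x"])
  next
    case False
    define r where "r = nat (x mod int K)"
    have "0 \<le> x mod int K" "x mod int K < int K" using assms(2) by simp_all
    then have r: "r < K" "int r = x mod int K" by (simp_all add: r_def nat_less_iff)
    have "x = int K * (x div int K) + int r" by (simp add: r)
    moreover have "x div int K \<in> H"
      using ambient_div_mem assms \<open>x \<in> H\<close> False by auto
    ultimately have "x \<in> dilate_shift (int K) H (int r)" unfolding dilate_shift_def by blast
    then show ?thesis using r(1) by blast
  qed
qed

lemma straddles_refine_to_residue_class: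
  assumes "ambient H" and "upper_quasi_density H \<mu>" and "B \<subseteq> H" and "straddles \<mu> \<xi> A B"
    and "K \<ge> 1"
  shows "\<exists>A' B' h. A \<subseteq> A' \<and> B' \<subseteq> B \<and> straddles \<mu> \<xi> A' B' \<and>
           B' - A' \<subseteq> dilate_shift (int K) H (int h)"
proof -
  let ?\<D> = "(\<lambda>r. dilate_shift (int K) H (int r)) ` {..<K} \<union> (\<lambda>i. {int i}) ` {..<K}"
  have "finite ?\<D>" by simp
  moreover have "B - A \<subseteq> \<Union>?\<D>"
    using ambient_subset_residue_cover[OF assms(1,5)] assms(3) by blast
  ultimately obtain A' B' D where D: "D \<in> ?\<D>"
    and AB': "A \<subseteq> A'" "B' \<subseteq> B" "straddles \<mu> \<xi> A' B'" and gap: "B' - A' \<subseteq> D"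
    using straddles_refine_to_cover_piece[OF _ _ assms(4)] by meson
  from D consider (residue) r where "D = dilate_shift (int K) H (int r)" | (point) i where "D = {int i}"
    by blast
  then show ?thesis
  proof cases
    case residue
    with AB' gap show ?thesis by blast
  next
    case point
    have "B' \<subseteq> H" using AB'(2) assms(3) by (rule order_trans)
    with gap point show ?thesis using straddles_gap_not_singleton[OF assms(2) _ AB'(3)] by blast
  qed
qed

lemma nested_straddles_sequence:
  assumes "ambient H" and "upper_quasi_density H \<mu>" and "Y \<subseteq> H" and "straddles \<mu> \<xi> X Y"
  obtains A B :: "nat \<Rightarrow> int set"
  where "A 0 = X" and "B 0 = Y" and "\<And>n. straddles \<mu> \<xi> (A n) (B n)"
    and "\<And>n. A n \<subseteq> A (Suc n)" and "\<And>n. B (Suc n) \<subseteq> B n"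
    and "\<And>n. \<exists>h :: nat. B (Suc n) - A (Suc n) \<subseteq> dilate_shift (int (Suc n)) H (int h)"
proof -
  define P where "P n p \<longleftrightarrow> straddles \<mu> \<xi> (fst p) (snd p) \<and> snd p \<subseteq> H \<and> (n = 0 \<longrightarrow> p = (X, Y))"
    for n :: nat and p :: "int set \<times> int set"
  define Q where "Q n p q \<longleftrightarrow> fst p \<subseteq> fst q \<and> snd q \<subseteq> snd p \<and>
      (\<exists>h :: nat. snd q - fst q \<subseteq> dilate_shift (int (Suc n)) H (int h))"
    for n :: nat and p q :: "int set \<times> int set"
  have "\<exists>q. P (Suc n) q \<and> Q n p q" if "P n p" for n p
  proof -
    from that have "snd p \<subseteq> H" "straddles \<mu> \<xi> (fst p) (snd p)" by (simp_all add: P_def)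
    from straddles_refine_to_residue_class[OF assms(1,2) this, of "Suc n"]
    obtain A' B' h where "fst p \<subseteq> A'" "B' \<subseteq> snd p" "straddles \<mu> \<xi> A' B'"
      "B' - A' \<subseteq> dilate_shift (int (Suc n)) H (int h)" by auto
    with \<open>snd p \<subseteq> H\<close> have "P (Suc n) (A', B') \<and> Q n p (A', B')" by (auto simp: P_def Q_def)
    then show ?thesis ..
  qed
  moreover have "P 0 (X, Y)" using assms(3,4) by (simp add: P_def)
  ultimately obtain s where s: "\<And>n. P n (s n) \<and> Q n (s n) (s (Suc n))"
    using dependent_nat_choice[of P Q] by blast
  show thesis
  proof (rule that[of "fst \<circ> s" "snd \<circ> s"])
    show "(fst \<circ> s) 0 = X" "(snd \<circ> s) 0 = Y" using s[of 0] by (simp_all add: P_def)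
  qed (use s in \<open>simp_all add: P_def Q_def\<close>)
qed

theorem mainTheorem9:
  fixes H X Y :: "int set" and \<mu> :: "int set \<Rightarrow> real" and \<xi> :: real
  assumes "ambient H"
    and "upper_quasi_density H \<mu>"
    and "X \<subseteq> Y" and "Y \<subseteq> H"
    and "\<mu> X < \<mu> Y"
    and "\<mu> X < \<xi>" and "\<xi> < \<mu> Y"
  shows "\<exists>A B :: nat \<Rightarrow> int set.
           X \<subseteq> A 1 \<and> B 1 \<subseteq> Y \<and>
           (\<forall>n\<ge>1. A n \<subseteq> A (n + 1) \<and> A n \<subseteq> B n \<and> B (n + 1) \<subseteq> B n) \<and>
           (\<forall>n\<ge>1. \<mu> (A n) < \<xi> \<and> \<xi> \<le> \<mu> (B n)) \<and>
           (\<forall>n\<ge>1. \<exists>h k :: nat. k \<ge> n \<and>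
               B n - A n \<subseteq> dilate_shift (int k) H (int h))"
proof -
  have XY: "straddles \<mu> \<xi> X Y" using assms(3,6,7) by (simp add: straddles_def)
  obtain A B where "A 0 = X" "B 0 = Y" and straddle: "\<And>n. straddles \<mu> \<xi> (A n) (B n)"
    and mono: "\<And>n. A n \<subseteq> A (Suc n)" "\<And>n. B (Suc n) \<subseteq> B n"
    and residue: "\<And>n. \<exists>h :: nat. B (Suc n) - A (Suc n) \<subseteq> dilate_shift (int (Suc n)) H (int h)"
    using nested_straddles_sequence[OF assms(1,2,4) XY] by blast
  have "X \<subseteq> A 1" "B 1 \<subseteq> Y" using mono[of 0] \<open>A 0 = X\<close> \<open>B 0 = Y\<close> by simp_all
  moreover have "A n \<subseteq> A (n + 1) \<and> A n \<subseteq> B n \<and> B (n + 1) \<subseteq> B n" for n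
    using mono straddle[of n] by (simp add: straddles_def)
  moreover have "\<mu> (A n) < \<xi> \<and> \<xi> \<le> \<mu> (B n)" for n
    using straddle[of n] by (simp add: straddles_def)
  moreover have "\<exists>h k :: nat. k \<ge> n \<and> B n - A n \<subseteq> dilate_shift (int k) H (int h)" if "n \<ge> 1" for n
  proof -
    obtain m where "n = Suc m" using \<open>n \<ge> 1\<close> by (cases n) auto
    with residue[of m] show ?thesis using le_refl by blast
  qed
  ultimately show ?thesis by (intro exI[of _ A] exI[of _ B]) simp
qed

end
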